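(* Let $A$ be a compact C$^*$-algebra and let $e,w$ be finite rank tripotents in $A$. Suppose that $e$ is minimal and $\|e-w\|=2$. Then $w=-e+P_0(e)(w)$.
   Context: A compact C$^*$-algebra is a C$^*$-algebra which is a $c_0$-direct sum of algebras $K(H_i)$ of compact operators on complex Hilbert spaces; it is regarded as a JB$^*$-triple with $\{a,b,c\}=\frac12(ab^*c+cb^*a)$. A tripotent is $e$ with $\{e,e,e\}=e$ (a partial isometry); $A=A_2(e)\oplus A_1(e)\oplus A_0(e)$ with $A_i(e)$ the $\frac i2$-eigenspace of $L(e,e):z\mapsto\{e,e,z\}$, and $P_0(e)$ is the projection onto $A_0(e)$ along this decomposition. $e$ is minimal if $A_2(e)=\mathbb{C}e\neq\{0\}$; $a\perp b$ means $\{a,b,z\}=0$ for all $z$; a finite rank tripotent is a finite sum of mutually orthogonal minimal tripotents. *)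

theory Defs
  imports "HOL-Analysis.Analysis"
begin

text \<open>Every complex Hilbert space is (isometrically) some l2(I);
 a c0-direct sum of K(H_k), H_k = l2(J_k), is realised as the algebra of compact
 operators on l2(I), I the disjoint union of the J_k (given by a block labelling
 blk :: I => K), which commute with all block projections (block-diagonal compact
 operators).\<close>

type_synonym 'i vec = "'i \<Rightarrow> complex"
type_synonym 'i op = "'i vec \<Rightarrow> 'i vec"

definition l2 :: "'i vec set" where
  "l2 = {x. (\<lambda>i. (cmod (x i))\<^sup>2) summable_on UNIV}"

definition vnorm :: "'i vec \<Rightarrow> real" where
  "vnorm x = sqrt (infsum (\<lambda>i. (cmod (x i))\<^sup>2) UNIV)"

definition cinner :: "'i vec \<Rightarrow> 'i vec \<Rightarrow> complex" where
  "cinner x y = infsum (\<lambda>i. cnj (x i) * y i) UNIV"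

definition bounded_op :: "'i op \<Rightarrow> bool" where
  "bounded_op T \<longleftrightarrow>
     (\<forall>x\<in>l2. T x \<in> l2) \<and> (\<forall>x. x \<notin> l2 \<longrightarrow> T x = (\<lambda>_. 0)) \<and>
     (\<forall>x\<in>l2. \<forall>y\<in>l2. \<forall>c. T (\<lambda>i. c * x i + y i) = (\<lambda>i. c * T x i + T y i)) \<and>
     (\<exists>K. \<forall>x\<in>l2. vnorm (T x) \<le> K * vnorm x)"

definition op_norm :: "'i op \<Rightarrow> real" where
  "op_norm T = Sup {vnorm (T x) | x. x \<in> l2 \<and> vnorm x \<le> 1}"

definition adjoint :: "'i op \<Rightarrow> 'i op" where
  "adjoint T = (THE S. bounded_op S \<and> (\<forall>x\<in>l2. \<forall>y\<in>l2. cinner (T x) y = cinner x (S y)))"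

definition compact_op :: "'i op \<Rightarrow> bool" where
  "compact_op T \<longleftrightarrow> bounded_op T \<and>
     (\<forall>\<epsilon>>0. \<exists>F. finite F \<and> F \<subseteq> l2 \<and>
        (\<forall>x\<in>l2. vnorm x \<le> 1 \<longrightarrow> (\<exists>f\<in>F. vnorm (\<lambda>i. T x i - f i) < \<epsilon>)))"

definition block_proj :: "('i \<Rightarrow> 'k) \<Rightarrow> 'k \<Rightarrow> 'i op" where
  "block_proj blk k x = (\<lambda>i. if blk i = k then x i else 0)"

definition compact_cstar :: "('i \<Rightarrow> 'k) \<Rightarrow> 'i op set" where
  "compact_cstar blk = {T. compact_op T \<and>
     (\<forall>k. \<forall>x\<in>l2. T (block_proj blk k x) = block_proj blk k (T x))}"

definition op_zero :: "'i op" where "op_zero = (\<lambda>x i. 0)"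
definition op_add :: "'i op \<Rightarrow> 'i op \<Rightarrow> 'i op" where "op_add S T = (\<lambda>x i. S x i + T x i)"
definition op_sub :: "'i op \<Rightarrow> 'i op \<Rightarrow> 'i op" where "op_sub S T = (\<lambda>x i. S x i - T x i)"
definition op_neg :: "'i op \<Rightarrow> 'i op" where "op_neg T = (\<lambda>x i. - T x i)"
definition op_smult :: "complex \<Rightarrow> 'i op \<Rightarrow> 'i op" where "op_smult c T = (\<lambda>x i. c * T x i)"

definition op_sum :: "'i op set \<Rightarrow> 'i op" where
  "op_sum F = (\<lambda>x i. \<Sum>u\<in>F. u x i)"

definition trip :: "'i op \<Rightarrow> 'i op \<Rightarrow> 'i op \<Rightarrow> 'i op" where
  "trip a b c = (\<lambda>x i. (a (adjoint b (c x)) i + c (adjoint b (a x)) i) / 2)"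

definition tripotent :: "'i op set \<Rightarrow> 'i op \<Rightarrow> bool" where
  "tripotent A e \<longleftrightarrow> e \<in> A \<and> trip e e e = e"

definition peirce2 :: "'i op set \<Rightarrow> 'i op \<Rightarrow> 'i op set" where
  "peirce2 A e = {z\<in>A. trip e e z = z}"
definition peirce1 :: "'i op set \<Rightarrow> 'i op \<Rightarrow> 'i op set" where
  "peirce1 A e = {z\<in>A. trip e e z = op_smult (1/2) z}"
definition peirce0 :: "'i op set \<Rightarrow> 'i op \<Rightarrow> 'i op set" where
  "peirce0 A e = {z\<in>A. trip e e z = op_zero}"

definition P0 :: "'i op set \<Rightarrow> 'i op \<Rightarrow> 'i op \<Rightarrow> 'i op" where
  "P0 A e w = (THE z. z \<in> peirce0 A e \<and>
      (\<exists>a\<in>peirce2 A e. \<exists>b\<in>peirce1 A e. w = op_add (op_add a b) z))"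

definition minimal_trip :: "'i op set \<Rightarrow> 'i op \<Rightarrow> bool" where
  "minimal_trip A e \<longleftrightarrow> tripotent A e \<and> peirce2 A e = {op_smult c e | c. True} \<and> e \<noteq> op_zero"

definition orth :: "'i op set \<Rightarrow> 'i op \<Rightarrow> 'i op \<Rightarrow> bool" where
  "orth A a b \<longleftrightarrow> (\<forall>z\<in>A. trip a b z = op_zero)"

definition finite_rank_trip :: "'i op set \<Rightarrow> 'i op \<Rightarrow> bool" where
  "finite_rank_trip A w \<longleftrightarrow> (\<exists>F. finite F \<and> (\<forall>u\<in>F. minimal_trip A u) \<and>
      (\<forall>u\<in>F. \<forall>v\<in>F. u \<noteq> v \<longrightarrow> orth A u v) \<and> w = op_sum F)"

end

theory Submission
  imports Defs
begin

text \<open>Let p = e e* and q = e* e be the final and initial projections of the partial isometry e.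
  The compression p w q lies in A_2(e), which is C e by minimality, say p w q = c e.  Evaluating
  e - w at unit vectors x where it almost attains its norm 2 makes e x and w x almost antipodal,
  and this forces c = -1.  Then w q x has norm at most that of its projection p w q x = -e x, so
  w q = -e; the same argument for the adjoints gives p w = -e.  Hence
  {e,e,w} = (p w + w q)/2 = -e, i.e. w + e lies in A_0(e), and it is the Peirce-0 component
  of w = -e + 0 + (w + e).\<close>

section \<open>The sequence space l2\<close>

lemma l2_iff_summable: "x \<in> l2 \<longleftrightarrow> (\<lambda>i. (cmod (x i))\<^sup>2) summable_on UNIV"
  by (simp add: l2_def)

lemma l2_zero [simp]: "(\<lambda>i. 0) \<in> l2"
  by (simp add: l2_def)

lemma l2_add:
  assumes "x \<in> l2" "y \<in> l2"
  shows "(\<lambda>i. x i + y i) \<in> l2"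
  unfolding l2_iff_summable
proof (rule summable_on_comparison_test)
  show "(\<lambda>i. 2 * (cmod (x i))\<^sup>2 + 2 * (cmod (y i))\<^sup>2) summable_on UNIV"
    using assms unfolding l2_iff_summable by (intro summable_on_add summable_on_cmult_right)
  fix i
  have "(cmod (x i + y i))\<^sup>2 \<le> (cmod (x i) + cmod (y i))\<^sup>2"
    by (simp add: norm_triangle_ineq power_mono)
  also have "\<dots> \<le> 2 * (cmod (x i))\<^sup>2 + 2 * (cmod (y i))\<^sup>2"
    using sum_squares_bound[of "cmod (x i)" "cmod (y i)"] by (simp add: power2_sum)
  finally show "(cmod (x i + y i))\<^sup>2 \<le> 2 * (cmod (x i))\<^sup>2 + 2 * (cmod (y i))\<^sup>2" .
qed simp

lemma l2_scale: "x \<in> l2 \<Longrightarrow> (\<lambda>i. c * x i) \<in> l2"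
  by (simp add: l2_iff_summable norm_mult power_mult_distrib summable_on_cmult_right)

lemma l2_neg: "x \<in> l2 \<Longrightarrow> (\<lambda>i. - x i) \<in> l2"
  using l2_scale[of x "-1"] by simp

lemma l2_diff: "x \<in> l2 \<Longrightarrow> y \<in> l2 \<Longrightarrow> (\<lambda>i. x i - y i) \<in> l2"
  using l2_add[OF _ l2_neg, of x y] by simp

lemma l2_sum: "finite F \<Longrightarrow> (\<And>u. u \<in> F \<Longrightarrow> f u \<in> l2) \<Longrightarrow> (\<lambda>i. \<Sum>u\<in>F. f u i) \<in> l2"
  by (induction F rule: finite_induct) (auto intro: l2_add)

lemma l2_finite_support: "finite J \<Longrightarrow> (\<lambda>i. if i \<in> J then x i else 0) \<in> l2"
  unfolding l2_iff_summable
  by (rule finite_nonzero_values_imp_summable_on) (rule finite_subset[of _ J], auto)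

definition delta :: "'i \<Rightarrow> 'i vec" where
  "delta j = (\<lambda>i. if i = j then 1 else 0)"

lemma l2_delta: "delta j \<in> l2"
  using l2_finite_support[of "{j}" "\<lambda>_. 1"] by (simp add: delta_def)

lemma finite_support_eq_sum_delta:
  "finite J \<Longrightarrow> (\<lambda>i. if i \<in> J then x i else 0) = (\<lambda>k. \<Sum>j\<in>J. x j * delta j k)"
  by (auto simp: delta_def fun_eq_iff if_distrib[of "\<lambda>c. _ * c"] sum.If_cases)

lemma l2_norm_mult_summable:
  assumes "x \<in> l2" "y \<in> l2"
  shows "(\<lambda>i. cmod (x i) * cmod (y i)) summable_on UNIV"
proof (rule summable_on_comparison_test)
  show "(\<lambda>i. ((cmod (x i))\<^sup>2 + (cmod (y i))\<^sup>2) * (1 / 2)) summable_on UNIV"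
    using assms unfolding l2_iff_summable by (intro summable_on_cmult_left summable_on_add)
  show "cmod (x i) * cmod (y i) \<le> ((cmod (x i))\<^sup>2 + (cmod (y i))\<^sup>2) * (1 / 2)" for i
    using sum_squares_bound[of "cmod (x i)" "cmod (y i)"] by simp
qed simp

lemma l2_inner_summable: "x \<in> l2 \<Longrightarrow> y \<in> l2 \<Longrightarrow> (\<lambda>i. cnj (x i) * y i) summable_on UNIV"
  by (rule abs_summable_summable) (use l2_norm_mult_summable in \<open>simp add: norm_mult\<close>)

lemma vnorm_nonneg [simp]: "vnorm x \<ge> 0"
  by (simp add: vnorm_def infsum_nonneg)

lemma vnorm_power2: "(vnorm x)\<^sup>2 = infsum (\<lambda>i. (cmod (x i))\<^sup>2) UNIV"
  by (simp add: vnorm_def infsum_nonneg)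

lemma vnorm_zero [simp]: "vnorm (\<lambda>i. 0) = 0"
  by (simp add: vnorm_def)

lemma vnorm_neg: "vnorm (\<lambda>i. - x i) = vnorm x"
  by (simp add: vnorm_def)

lemma vnorm_eq_0_imp: "x \<in> l2 \<Longrightarrow> vnorm x = 0 \<Longrightarrow> x = (\<lambda>i. 0)"
proof
  fix i assume "x \<in> l2" "vnorm x = 0"
  then have "(cmod (x i))\<^sup>2 = 0"
    using nonneg_infsum_le_0D[of "\<lambda>i. (cmod (x i))\<^sup>2" UNIV i]
    by (simp add: l2_iff_summable vnorm_power2[symmetric])
  then show "x i = 0" by simp
qed

lemma sum_le_vnorm_power2: "x \<in> l2 \<Longrightarrow> finite J \<Longrightarrow> (\<Sum>i\<in>J. (cmod (x i))\<^sup>2) \<le> (vnorm x)\<^sup>2"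
  unfolding vnorm_power2 by (rule finite_sum_le_infsum) (simp_all add: l2_iff_summable)

lemma infsum_norm_mult_le:
  assumes x: "x \<in> l2" and y: "y \<in> l2"
  shows "infsum (\<lambda>i. cmod (x i) * cmod (y i)) UNIV \<le> vnorm x * vnorm y"
proof (rule infsum_le_finite_sums[OF l2_norm_mult_summable[OF x y]])
  fix J :: "'a set" assume J: "finite J"
  have "(\<Sum>i\<in>J. cmod (x i) * cmod (y i)) \<le> L2_set (\<lambda>i. cmod (x i)) J * L2_set (\<lambda>i. cmod (y i)) J"
    using L2_set_mult_ineq[of "\<lambda>i. cmod (x i)" "\<lambda>i. cmod (y i)" J] by simp
  also have "\<dots> \<le> vnorm x * vnorm y"
    unfolding L2_set_def
    using sum_le_vnorm_power2[OF x J] sum_le_vnorm_power2[OF y J]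
    by (intro mult_mono) (auto intro: real_le_lsqrt sum_nonneg)
  finally show "(\<Sum>i\<in>J. cmod (x i) * cmod (y i)) \<le> vnorm x * vnorm y" .
qed

lemma cinner_cauchy_schwarz:
  assumes "x \<in> l2" "y \<in> l2"
  shows "cmod (cinner x y) \<le> vnorm x * vnorm y"
proof -
  have "cmod (cinner x y) \<le> infsum (\<lambda>i. cmod (x i) * cmod (y i)) UNIV"
    unfolding cinner_def using norm_infsum_bound[of "\<lambda>i. cnj (x i) * y i" UNIV]
    by (simp add: norm_mult l2_norm_mult_summable assms)
  also have "\<dots> \<le> vnorm x * vnorm y"
    by (rule infsum_norm_mult_le[OF assms])
  finally show ?thesis .
qed

lemma cinner_self: "x \<in> l2 \<Longrightarrow> cinner x x = complex_of_real ((vnorm x)\<^sup>2)"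
proof -
  assume x: "x \<in> l2"
  have "(\<lambda>i. cnj (x i) * x i) = (\<lambda>i. complex_of_real ((cmod (x i))\<^sup>2))"
    by (simp add: complex_norm_square mult.commute del: of_real_power)
  moreover have "((\<lambda>i. complex_of_real ((cmod (x i))\<^sup>2)) has_sum complex_of_real ((vnorm x)\<^sup>2)) UNIV"
    unfolding vnorm_power2 by (rule has_sum_of_real) (use x in \<open>simp add: l2_iff_summable\<close>)
  ultimately show ?thesis
    unfolding cinner_def by (simp add: infsumI)
qed

lemma cinner_cnj: "cnj (cinner x y) = cinner y x"
  unfolding cinner_def by (simp flip: infsum_cnj add: mult.commute)

lemma cinner_add_left:
  "x \<in> l2 \<Longrightarrow> y \<in> l2 \<Longrightarrow> z \<in> l2 \<Longrightarrow> cinner (\<lambda>i. x i + y i) z = cinner x z + cinner y z"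
  unfolding cinner_def by (simp add: distrib_right infsum_add l2_inner_summable)

lemma cinner_add_right:
  "x \<in> l2 \<Longrightarrow> y \<in> l2 \<Longrightarrow> z \<in> l2 \<Longrightarrow> cinner x (\<lambda>i. y i + z i) = cinner x y + cinner x z"
  unfolding cinner_def by (simp add: distrib_left infsum_add l2_inner_summable)

lemma cinner_scale_left: "x \<in> l2 \<Longrightarrow> y \<in> l2 \<Longrightarrow> cinner (\<lambda>i. c * x i) y = cnj c * cinner x y"
  unfolding cinner_def by (simp add: mult.assoc infsum_cmult_right l2_inner_summable)

lemma cinner_scale_right: "x \<in> l2 \<Longrightarrow> y \<in> l2 \<Longrightarrow> cinner x (\<lambda>i. c * y i) = c * cinner x y"
  unfolding cinner_def by (simp add: mult.left_commute infsum_cmult_right l2_inner_summable)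

lemma cinner_neg_left: "x \<in> l2 \<Longrightarrow> y \<in> l2 \<Longrightarrow> cinner (\<lambda>i. - x i) y = - cinner x y"
  using cinner_scale_left[of x y "-1"] by simp

lemma cinner_neg_right: "x \<in> l2 \<Longrightarrow> y \<in> l2 \<Longrightarrow> cinner x (\<lambda>i. - y i) = - cinner x y"
  using cinner_scale_right[of x y "-1"] by simp

lemma cinner_diff_right:
  "x \<in> l2 \<Longrightarrow> y \<in> l2 \<Longrightarrow> z \<in> l2 \<Longrightarrow> cinner x (\<lambda>i. y i - z i) = cinner x y - cinner x z"
  using cinner_add_right[of x y "\<lambda>i. - z i"] cinner_neg_right[of x z] l2_neg[of z] by simp

lemma cinner_sum_left:
  "finite J \<Longrightarrow> (\<And>j. j \<in> J \<Longrightarrow> v j \<in> l2) \<Longrightarrow> y \<in> l2 \<Longrightarrow>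
   cinner (\<lambda>k. \<Sum>j\<in>J. v j k) y = (\<Sum>j\<in>J. cinner (v j) y)"
proof (induction J rule: finite_induct)
  case (insert a J)
  then have "cinner (\<lambda>k. v a k + (\<Sum>j\<in>J. v j k)) y = cinner (v a) y + cinner (\<lambda>k. \<Sum>j\<in>J. v j k) y"
    by (intro cinner_add_left) (auto intro: l2_sum)
  with insert show ?case by simp
qed (simp add: cinner_def)

lemma cinner_sum_right:
  assumes "finite J" "\<And>j. j \<in> J \<Longrightarrow> v j \<in> l2" "y \<in> l2"
  shows "cinner y (\<lambda>k. \<Sum>j\<in>J. v j k) = (\<Sum>j\<in>J. cinner y (v j))"
proof -
  have "cinner y (\<lambda>k. \<Sum>j\<in>J. v j k) = cnj (cinner (\<lambda>k. \<Sum>j\<in>J. v j k) y)"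
    by (simp add: cinner_cnj)
  also have "\<dots> = (\<Sum>j\<in>J. cnj (cinner (v j) y))"
    by (simp add: cinner_sum_left[OF assms])
  finally show ?thesis by (simp add: cinner_cnj)
qed

lemma cinner_delta: "cinner (delta j) x = x j"
proof -
  have "cinner (delta j) x = infsum (\<lambda>i. x j) {j}"
    unfolding cinner_def by (rule infsum_cong_neutral) (auto simp: delta_def)
  then show ?thesis by simp
qed

lemma l2_eqI: "(\<And>z. z \<in> l2 \<Longrightarrow> cinner z x = cinner z y) \<Longrightarrow> x = y"
proof
  fix i assume "\<And>z. z \<in> l2 \<Longrightarrow> cinner z x = cinner z y"
  from this[OF l2_delta] show "x i = y i" by (simp add: cinner_delta)
qed

lemma vnorm_add_power2:
  assumes x: "x \<in> l2" and y: "y \<in> l2"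
  shows "(vnorm (\<lambda>i. x i + y i))\<^sup>2 = (vnorm x)\<^sup>2 + (vnorm y)\<^sup>2 + 2 * Re (cinner x y)"
proof -
  have xy: "(\<lambda>i. x i + y i) \<in> l2" by (rule l2_add[OF x y])
  have "cinner (\<lambda>i. x i + y i) (\<lambda>i. x i + y i) = cinner x x + cinner y y + (cinner x y + cinner y x)"
    unfolding cinner_add_left[OF x y xy] cinner_add_right[OF x x y] cinner_add_right[OF y x y]
    by (simp add: algebra_simps)
  also have "cinner y x = cnj (cinner x y)"
    by (simp add: cinner_cnj)
  finally have "complex_of_real ((vnorm (\<lambda>i. x i + y i))\<^sup>2)
      = complex_of_real ((vnorm x)\<^sup>2 + (vnorm y)\<^sup>2 + 2 * Re (cinner x y))"
    by (simp add: cinner_self x y xy complex_add_cnj)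
  then show ?thesis
    by (simp only: of_real_eq_iff)
qed

lemma vnorm_triangle: "x \<in> l2 \<Longrightarrow> y \<in> l2 \<Longrightarrow> vnorm (\<lambda>i. x i + y i) \<le> vnorm x + vnorm y"
proof (rule power2_le_imp_le)
  assume x: "x \<in> l2" and y: "y \<in> l2"
  have "Re (cinner x y) \<le> vnorm x * vnorm y"
    using complex_Re_le_cmod[of "cinner x y"] cinner_cauchy_schwarz[OF x y] by linarith
  then show "(vnorm (\<lambda>i. x i + y i))\<^sup>2 \<le> (vnorm x + vnorm y)\<^sup>2"
    by (simp add: vnorm_add_power2[OF x y] power2_sum)
qed simp

lemma vnorm_parallelogram:
  assumes "x \<in> l2" "y \<in> l2"
  shows "(vnorm (\<lambda>i. x i + y i))\<^sup>2 + (vnorm (\<lambda>i. x i - y i))\<^sup>2 = 2 * (vnorm x)\<^sup>2 + 2 * (vnorm y)\<^sup>2"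
  using vnorm_add_power2[OF assms] vnorm_add_power2[OF assms(1) l2_neg[OF assms(2)]]
  by (simp add: vnorm_neg cinner_neg_right assms)

lemma vnorm_finite_support_power2:
  "finite J \<Longrightarrow> (vnorm (\<lambda>i. if i \<in> J then x i else 0))\<^sup>2 = (\<Sum>i\<in>J. (cmod (x i))\<^sup>2)"
  unfolding vnorm_power2 by (subst infsum_cong_neutral[where T = J and g = "\<lambda>i. (cmod (x i))\<^sup>2"]) auto

lemma cinner_finite_support:
  "finite J \<Longrightarrow> cinner (\<lambda>i. if i \<in> J then x i else 0) y = (\<Sum>j\<in>J. cnj (x j) * y j)"
  unfolding cinner_def by (subst infsum_cong_neutral[where T = J and g = "\<lambda>j. cnj (x j) * y j"]) auto

lemma l2_tail_small:
  assumes x: "x \<in> l2" and e: "\<epsilon> > 0"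
  shows "\<exists>J. finite J \<and> vnorm (\<lambda>i. if i \<in> J then 0 else x i) \<le> \<epsilon>"
proof -
  define f where "f = (\<lambda>i. (cmod (x i))\<^sup>2)"
  have f: "f summable_on UNIV" using x by (simp add: l2_iff_summable f_def)
  obtain J where J: "finite J" and d: "dist (sum f J) (infsum f UNIV) \<le> \<epsilon>\<^sup>2"
    using infsum_finite_approximation[OF f, of "\<epsilon>\<^sup>2"] e by auto
  have "infsum f UNIV = infsum f J + infsum f (- J)"
    using infsum_Un_disjoint[OF summable_on_subset_banach[OF f] summable_on_subset_banach[OF f], of J "- J"]
    by simp
  moreover have "(vnorm (\<lambda>i. if i \<in> J then 0 else x i))\<^sup>2 = infsum f (- J)"
    unfolding vnorm_power2 f_def by (rule infsum_cong_neutral) auto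
  ultimately have "(vnorm (\<lambda>i. if i \<in> J then 0 else x i))\<^sup>2 \<le> \<epsilon>\<^sup>2"
    using d J by (simp add: dist_real_def)
  then show ?thesis
    using J e by (metis power2_le_imp_le less_imp_le)
qed

section \<open>Bounded operators and adjoints\<close>

lemma bounded_op_l2: "bounded_op T \<Longrightarrow> T x \<in> l2"
  unfolding bounded_op_def by (cases "x \<in> l2") auto

lemma bounded_op_outside: "bounded_op T \<Longrightarrow> x \<notin> l2 \<Longrightarrow> T x = (\<lambda>i. 0)"
  unfolding bounded_op_def by auto

lemma bounded_op_linear:
  "bounded_op T \<Longrightarrow> x \<in> l2 \<Longrightarrow> y \<in> l2 \<Longrightarrow> T (\<lambda>i. c * x i + y i) = (\<lambda>i. c * T x i + T y i)"
  unfolding bounded_op_def by auto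

lemma bounded_op_zero: "bounded_op T \<Longrightarrow> T (\<lambda>i. 0) = (\<lambda>i. 0)"
  using bounded_op_linear[of T "\<lambda>i. 0" "\<lambda>i. 0" 1] by (simp add: fun_eq_iff)

lemma bounded_op_add: "bounded_op T \<Longrightarrow> x \<in> l2 \<Longrightarrow> y \<in> l2 \<Longrightarrow> T (\<lambda>i. x i + y i) = (\<lambda>i. T x i + T y i)"
  using bounded_op_linear[of T x y 1] by simp

lemma bounded_op_scale: "bounded_op T \<Longrightarrow> x \<in> l2 \<Longrightarrow> T (\<lambda>i. c * x i) = (\<lambda>i. c * T x i)"
  using bounded_op_linear[of T x "\<lambda>i. 0" c] bounded_op_zero[of T] by simp

lemma bounded_op_neg: "bounded_op T \<Longrightarrow> x \<in> l2 \<Longrightarrow> T (\<lambda>i. - x i) = (\<lambda>i. - T x i)"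
  using bounded_op_scale[of T x "-1"] by simp

lemma bounded_op_diff: "bounded_op T \<Longrightarrow> x \<in> l2 \<Longrightarrow> y \<in> l2 \<Longrightarrow> T (\<lambda>i. x i - y i) = (\<lambda>i. T x i - T y i)"
  using bounded_op_add[of T x "\<lambda>i. - y i"] bounded_op_neg[of T y] l2_neg[of y] by simp

lemma bounded_op_sum:
  assumes T: "bounded_op T"
  shows "finite J \<Longrightarrow> (\<And>j. j \<in> J \<Longrightarrow> v j \<in> l2) \<Longrightarrow> T (\<lambda>k. \<Sum>j\<in>J. v j k) = (\<lambda>k. \<Sum>j\<in>J. T (v j) k)"
proof (induction J rule: finite_induct)
  case (insert a J)
  then have "T (\<lambda>k. v a k + (\<Sum>j\<in>J. v j k)) = (\<lambda>k. T (v a) k + T (\<lambda>k. \<Sum>j\<in>J. v j k) k)"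
    by (intro bounded_op_add[OF T]) (auto intro: l2_sum)
  with insert show ?case by simp
qed (simp add: bounded_op_zero[OF T])

lemma bounded_op_finite_support:
  assumes T: "bounded_op T" and J: "finite J"
  shows "T (\<lambda>i. if i \<in> J then x i else 0) = (\<lambda>k. \<Sum>j\<in>J. x j * T (delta j) k)"
  unfolding finite_support_eq_sum_delta[OF J]
  by (simp add: bounded_op_sum[OF T J] l2_scale l2_delta bounded_op_scale[OF T])

lemma bounded_op_bound: "bounded_op T \<Longrightarrow> \<exists>K\<ge>0. \<forall>x\<in>l2. vnorm (T x) \<le> K * vnorm x"
  unfolding bounded_op_def
  by (metis (no_types, opaque_lifting) max.cobounded1 max.cobounded2 mult_right_mono order.trans vnorm_nonneg)

lemma bounded_opI:
  assumes "\<And>x. x \<in> l2 \<Longrightarrow> T x \<in> l2" "\<And>x. x \<notin> l2 \<Longrightarrow> T x = (\<lambda>i. 0)"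
    and "\<And>x y c. x \<in> l2 \<Longrightarrow> y \<in> l2 \<Longrightarrow> T (\<lambda>i. c * x i + y i) = (\<lambda>i. c * T x i + T y i)"
    and "\<And>x. x \<in> l2 \<Longrightarrow> vnorm (T x) \<le> K * vnorm x"
  shows "bounded_op T"
  unfolding bounded_op_def using assms by blast

lemma bounded_op_comp:
  assumes A: "bounded_op A" and B: "bounded_op B"
  shows "bounded_op (\<lambda>x. A (B x))"
proof -
  obtain K1 where "K1 \<ge> 0" and K1: "\<forall>x\<in>l2. vnorm (A x) \<le> K1 * vnorm x"
    using bounded_op_bound[OF A] by blast
  obtain K2 where K2: "\<forall>x\<in>l2. vnorm (B x) \<le> K2 * vnorm x"
    using bounded_op_bound[OF B] by blast
  have "vnorm (A (B x)) \<le> K1 * K2 * vnorm x" if "x \<in> l2" for x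
    using K1 K2 \<open>K1 \<ge> 0\<close> that bounded_op_l2[OF B]
    by (metis mult.assoc mult_left_mono order.trans)
  then show ?thesis
    by (intro bounded_opI)
       (simp_all add: bounded_op_l2 A bounded_op_outside B bounded_op_zero
                      bounded_op_linear[OF B] bounded_op_linear[OF A])
qed

lemma bounded_op_op_zero: "bounded_op op_zero"
  by (rule bounded_opI[where K = 0]) (simp_all add: op_zero_def)

lemma bounded_op_op_add:
  assumes u: "bounded_op u" and v: "bounded_op v"
  shows "bounded_op (op_add u v)"
proof -
  obtain K1 where K1: "\<forall>x\<in>l2. vnorm (u x) \<le> K1 * vnorm x" using bounded_op_bound[OF u] by blast
  obtain K2 where K2: "\<forall>x\<in>l2. vnorm (v x) \<le> K2 * vnorm x" using bounded_op_bound[OF v] by blast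
  have "vnorm (op_add u v x) \<le> (K1 + K2) * vnorm x" if x: "x \<in> l2" for x
  proof -
    have "vnorm (op_add u v x) \<le> vnorm (u x) + vnorm (v x)"
      unfolding op_add_def by (rule vnorm_triangle[OF bounded_op_l2[OF u] bounded_op_l2[OF v]])
    also have "\<dots> \<le> (K1 + K2) * vnorm x"
      using K1 K2 x by (simp add: distrib_right add_mono)
    finally show ?thesis .
  qed
  moreover have "op_add u v (\<lambda>i. c * x i + y i) = (\<lambda>i. c * op_add u v x i + op_add u v y i)"
    if "x \<in> l2" "y \<in> l2" for x y c
    using that unfolding op_add_def bounded_op_linear[OF u that] bounded_op_linear[OF v that]
    by (simp add: algebra_simps)
  ultimately show ?thesis
    by (intro bounded_opI[where K = "K1 + K2"])
       (simp_all add: op_add_def l2_add bounded_op_l2 u v bounded_op_outside)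
qed

lemma bounded_op_op_neg: "bounded_op u \<Longrightarrow> bounded_op (op_neg u)"
  unfolding bounded_op_def op_neg_def
  by (auto simp: l2_neg vnorm_neg[of "u _"] algebra_simps fun_eq_iff)

lemma bounded_op_pointwise_sum:
  "finite F \<Longrightarrow> (\<And>v. v \<in> F \<Longrightarrow> bounded_op (g v)) \<Longrightarrow> bounded_op (\<lambda>y i. \<Sum>v\<in>F. g v y i)"
proof (induction F rule: finite_induct)
  case empty
  then show ?case using bounded_op_op_zero by (simp add: op_zero_def)
next
  case (insert a F)
  then have "bounded_op (op_add (g a) (\<lambda>y i. \<Sum>v\<in>F. g v y i))"
    by (intro bounded_op_op_add) auto
  with insert show ?case by (simp add: op_add_def)
qed

definition is_adjoint :: "'i op \<Rightarrow> 'i op \<Rightarrow> bool" where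
  "is_adjoint T S \<longleftrightarrow> bounded_op S \<and> (\<forall>x\<in>l2. \<forall>y\<in>l2. cinner (T x) y = cinner x (S y))"

lemma is_adjoint_bounded: "is_adjoint T S \<Longrightarrow> bounded_op S"
  by (simp add: is_adjoint_def)

lemma is_adjoint_cinner: "is_adjoint T S \<Longrightarrow> x \<in> l2 \<Longrightarrow> y \<in> l2 \<Longrightarrow> cinner (T x) y = cinner x (S y)"
  by (simp add: is_adjoint_def)

lemma is_adjoint_cinner':
  "is_adjoint T S \<Longrightarrow> x \<in> l2 \<Longrightarrow> y \<in> l2 \<Longrightarrow> cinner (S y) x = cinner y (T x)"
  by (metis cinner_cnj is_adjoint_cinner)

lemma is_adjoint_unique:
  assumes "is_adjoint T S1" "is_adjoint T S2"
  shows "S1 = S2"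
proof
  fix y
  show "S1 y = S2 y"
  proof (cases "y \<in> l2")
    case True
    then show ?thesis
      using assms by (intro l2_eqI) (simp add: is_adjoint_cinner[symmetric])
  qed (use assms in \<open>simp add: is_adjoint_def bounded_op_outside\<close>)
qed

lemma is_adjoint_sym: "bounded_op T \<Longrightarrow> is_adjoint T S \<Longrightarrow> is_adjoint S T"
  unfolding is_adjoint_def by (metis cinner_cnj)

lemma is_adjoint_comp:
  assumes "is_adjoint A A'" "is_adjoint B B'" "bounded_op B"
  shows "is_adjoint (\<lambda>x. A (B x)) (\<lambda>y. B' (A' y))"
  using assms
  by (simp add: is_adjoint_def bounded_op_comp bounded_op_l2)

lemma is_adjoint_op_neg:
  assumes "is_adjoint T S" "bounded_op T"
  shows "is_adjoint (op_neg T) (op_neg S)"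
  using assms bounded_op_op_neg[OF is_adjoint_bounded[OF assms(1)]] unfolding is_adjoint_def
  by (simp add: op_neg_def cinner_neg_left cinner_neg_right bounded_op_l2)

lemma is_adjoint_sum:
  assumes F: "finite F" and adj: "\<And>u. u \<in> F \<Longrightarrow> is_adjoint u (S u)" and bdd: "\<And>u. u \<in> F \<Longrightarrow> bounded_op u"
  shows "is_adjoint (op_sum F) (\<lambda>y i. \<Sum>u\<in>F. S u y i)"
  unfolding is_adjoint_def
proof (intro conjI ballI)
  show "bounded_op (\<lambda>y i. \<Sum>u\<in>F. S u y i)"
    using F adj by (intro bounded_op_pointwise_sum) (auto dest: is_adjoint_bounded)
  fix x y :: "'a vec" assume x: "x \<in> l2" and y: "y \<in> l2"
  have "cinner (op_sum F x) y = (\<Sum>u\<in>F. cinner (u x) y)"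
    unfolding op_sum_def by (rule cinner_sum_left[OF F _ y]) (simp add: bounded_op_l2 bdd)
  also have "\<dots> = (\<Sum>u\<in>F. cinner x (S u y))"
    using adj x y by (intro sum.cong refl) (simp add: is_adjoint_cinner)
  also have "\<dots> = cinner x (\<lambda>i. \<Sum>u\<in>F. S u y i)"
    using adj by (intro cinner_sum_right[OF F _ x, symmetric]) (meson bounded_op_l2 is_adjoint_bounded)
  finally show "cinner (op_sum F x) y = cinner x (\<lambda>i. \<Sum>u\<in>F. S u y i)" .
qed

lemma cinner_image_finite_support:
  assumes T: "bounded_op T" and J: "finite J" and y: "y \<in> l2"
  shows "cinner (T (\<lambda>i. if i \<in> J then x i else 0)) y = (\<Sum>j\<in>J. cnj (x j) * cinner (T (delta j)) y)"
  unfolding bounded_op_finite_support[OF T J]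
  by (simp add: cinner_sum_left[OF J _ y] l2_scale bounded_op_l2[OF T] cinner_scale_left y)

lemma eq_0_if_norm_le_sqrt:
  fixes z :: complex
  assumes r: "r > 0" and bound: "\<And>\<epsilon>. 0 < \<epsilon> \<Longrightarrow> \<epsilon> \<le> r \<Longrightarrow> cmod z \<le> C * sqrt \<epsilon>"
  shows "z = 0"
proof (rule ccontr)
  assume "z \<noteq> 0"
  then have m: "cmod z > 0" by simp
  then have C: "C > 0"
    using bound[OF r order.refl] r by (smt (verit, best) mult_nonpos_nonneg real_sqrt_ge_zero)
  define \<epsilon> where "\<epsilon> = min r ((cmod z / (2 * C))\<^sup>2)"
  have \<epsilon>: "0 < \<epsilon>" "\<epsilon> \<le> r" using r m C by (auto simp: \<epsilon>_def)
  have "sqrt \<epsilon> \<le> cmod z / (2 * C)"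
    using m C by (auto simp: \<epsilon>_def intro: real_le_lsqrt)
  then have "C * sqrt \<epsilon> \<le> cmod z / 2"
    using C by (simp add: field_simps)
  with bound[OF \<epsilon>] m show False by simp
qed

lemma adjoint_coeffs_partial_sums:
  assumes T: "bounded_op T" and K: "\<forall>x\<in>l2. vnorm (T x) \<le> K * vnorm x" "K \<ge> 0"
    and y: "y \<in> l2" and J: "finite J"
  shows "(\<Sum>i\<in>J. (cmod (cinner (T (delta i)) y))\<^sup>2) \<le> (K * vnorm y)\<^sup>2"
proof -
  define g where "g = (\<lambda>i. cinner (T (delta i)) y)"
  define s where "s = (\<Sum>i\<in>J. (cmod (g i))\<^sup>2)"
  define gJ where "gJ = (\<lambda>i. if i \<in> J then g i else 0)"
  have "s \<ge> 0" by (simp add: s_def sum_nonneg)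
  have gJ: "gJ \<in> l2" "vnorm gJ = sqrt s"
    using l2_finite_support[OF J] vnorm_finite_support_power2[OF J, of g]
    by (simp_all add: gJ_def s_def real_sqrt_unique)
  have "complex_of_real s = cinner (T gJ) y"
    unfolding gJ_def cinner_image_finite_support[OF T J y] s_def
    by (simp add: g_def complex_norm_square mult.commute del: of_real_power)
  then have "s \<le> vnorm (T gJ) * vnorm y"
    using cinner_cauchy_schwarz[OF bounded_op_l2[OF T] y, of gJ] \<open>s \<ge> 0\<close>
    by (metis abs_of_nonneg norm_of_real)
  also have "\<dots> \<le> K * sqrt s * vnorm y"
    using K(1) gJ by (metis mult_right_mono vnorm_nonneg)
  finally have le: "sqrt s * sqrt s \<le> sqrt s * (K * vnorm y)"
    using \<open>s \<ge> 0\<close> by (simp add: algebra_simps)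
  have "sqrt s \<le> K * vnorm y"
  proof (cases "s = 0")
    case False
    with \<open>s \<ge> 0\<close> have "sqrt s > 0" by simp
    with le show ?thesis
      by (meson mult_le_cancel_left_pos)
  qed (use K(2) in simp)
  then have "(sqrt s)\<^sup>2 \<le> (K * vnorm y)\<^sup>2"
    by (rule power_mono) (simp add: \<open>s \<ge> 0\<close>)
  then show ?thesis
    using \<open>s \<ge> 0\<close> by (simp add: s_def g_def)
qed

lemma adjoint_coeffs_bound:
  assumes T: "bounded_op T" and K: "\<forall>x\<in>l2. vnorm (T x) \<le> K * vnorm x" "K \<ge> 0" and y: "y \<in> l2"
  shows "(\<lambda>i. cinner (T (delta i)) y) \<in> l2 \<and> vnorm (\<lambda>i. cinner (T (delta i)) y) \<le> K * vnorm y"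
proof -
  define g where "g = (\<lambda>i. cinner (T (delta i)) y)"
  have partial_sums: "(\<Sum>i\<in>J. (cmod (g i))\<^sup>2) \<le> (K * vnorm y)\<^sup>2" if "finite J" for J
    unfolding g_def by (rule adjoint_coeffs_partial_sums[OF T K y that])
  have summable: "(\<lambda>i. (cmod (g i))\<^sup>2) summable_on UNIV"
    by (rule nonneg_bdd_above_summable_on)
       (auto intro!: bdd_aboveI[where M = "(K * vnorm y)\<^sup>2"] partial_sums)
  have "(vnorm g)\<^sup>2 \<le> (K * vnorm y)\<^sup>2"
    unfolding vnorm_power2 by (rule infsum_le_finite_sums[OF summable partial_sums])
  then have "vnorm g \<le> K * vnorm y"
    by (rule power2_le_imp_le) (simp add: K(2))
  with summable show ?thesis
    unfolding g_def l2_iff_summable by blast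
qed

lemma adjoint_coeffs_cinner:
  assumes T: "bounded_op T" and K: "\<forall>x\<in>l2. vnorm (T x) \<le> K * vnorm x" "K \<ge> 0"
    and x: "x \<in> l2" and y: "y \<in> l2"
  shows "cinner (T x) y = cinner x (\<lambda>i. cinner (T (delta i)) y)"
proof -
  define g where "g = (\<lambda>i. cinner (T (delta i)) y)"
  have g: "g \<in> l2" "vnorm g \<le> K * vnorm y"
    using adjoint_coeffs_bound[OF T K y] by (simp_all add: g_def)
  have "cmod (cinner (T x) y - cinner x g) \<le> (K * vnorm y + vnorm g) * sqrt \<epsilon>"
    if "0 < \<epsilon>" for \<epsilon>
  proof -
    obtain J where J: "finite J" and tail: "vnorm (\<lambda>i. if i \<in> J then 0 else x i) \<le> sqrt \<epsilon>"
      using l2_tail_small[OF x, of "sqrt \<epsilon>"] \<open>0 < \<epsilon>\<close> by auto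
    define xJ where "xJ = (\<lambda>i. if i \<in> J then x i else 0)"
    define d where "d = (\<lambda>i. if i \<in> J then 0 else x i)"
    have xJ: "xJ \<in> l2" by (simp add: xJ_def l2_finite_support J)
    have d: "d \<in> l2" "vnorm d \<le> sqrt \<epsilon>"
      using l2_diff[OF x xJ] tail by (simp_all add: d_def xJ_def if_distrib cong: if_cong)
    have split: "x = (\<lambda>i. xJ i + d i)" by (simp add: xJ_def d_def fun_eq_iff)
    have "cinner (T xJ) y = cinner xJ g"
      unfolding xJ_def cinner_image_finite_support[OF T J y] cinner_finite_support[OF J] g_def ..
    then have "cinner (T x) y - cinner x g = cinner (T d) y - cinner d g"
      by (subst (1 2) split)
         (simp add: bounded_op_add[OF T xJ d(1)] cinner_add_left bounded_op_l2[OF T] xJ d y g)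
    also have "cmod \<dots> \<le> vnorm (T d) * vnorm y + vnorm d * vnorm g"
      by (rule order_trans[OF norm_triangle_ineq4 add_mono])
         (intro cinner_cauchy_schwarz bounded_op_l2[OF T] y d g)+
    also have "\<dots> \<le> (K * vnorm d) * vnorm y + vnorm d * vnorm g"
      using K d by (simp add: mult_right_mono)
    also have "\<dots> = (K * vnorm y + vnorm g) * vnorm d" by (simp add: algebra_simps)
    also have "\<dots> \<le> (K * vnorm y + vnorm g) * sqrt \<epsilon>"
      using d K by (simp add: mult_left_mono)
    finally show ?thesis .
  qed
  then have "cinner (T x) y - cinner x g = 0"
    by (intro eq_0_if_norm_le_sqrt[where r = 1]) auto
  then show ?thesis by (simp add: g_def)
qed

lemma is_adjoint_exists:
  assumes T: "bounded_op T"
  shows "\<exists>S. is_adjoint T S"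
proof -
  obtain K where K: "\<forall>x\<in>l2. vnorm (T x) \<le> K * vnorm x" "K \<ge> 0"
    using bounded_op_bound[OF T] by blast
  define S where "S = (\<lambda>y. if y \<in> l2 then (\<lambda>i. cinner (T (delta i)) y) else (\<lambda>i. 0))"
  have "bounded_op S"
  proof (rule bounded_opI)
    show "S y \<in> l2" "vnorm (S y) \<le> K * vnorm y" if "y \<in> l2" for y
      using adjoint_coeffs_bound[OF T K that] that by (simp_all add: S_def)
    show "S (\<lambda>i. c * x i + y i) = (\<lambda>i. c * S x i + S y i)" if "x \<in> l2" "y \<in> l2" for x y c
      using that l2_add[OF l2_scale[OF that(1)] that(2)]
      by (simp add: S_def cinner_add_right cinner_scale_right l2_scale l2_delta bounded_op_l2[OF T])
  qed (simp add: S_def)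
  moreover have "\<forall>x\<in>l2. \<forall>y\<in>l2. cinner (T x) y = cinner x (S y)"
    using adjoint_coeffs_cinner[OF T K] by (simp add: S_def)
  ultimately show ?thesis
    unfolding is_adjoint_def by blast
qed

lemma adjoint_eqI:
  assumes "is_adjoint T S"
  shows "adjoint T = S"
  unfolding adjoint_def
proof (rule the_equality)
  show "bounded_op S \<and> (\<forall>x\<in>l2. \<forall>y\<in>l2. cinner (T x) y = cinner x (S y))"
    using assms by (simp add: is_adjoint_def)
  show "S' = S" if "bounded_op S' \<and> (\<forall>x\<in>l2. \<forall>y\<in>l2. cinner (T x) y = cinner x (S' y))" for S'
    using is_adjoint_unique[of T S' S] that assms by (simp add: is_adjoint_def)
qed

lemma is_adjoint_adjoint: "bounded_op T \<Longrightarrow> is_adjoint T (adjoint T)"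
  using is_adjoint_exists[of T] adjoint_eqI[of T] by auto

lemma bounded_op_adjoint: "bounded_op T \<Longrightarrow> bounded_op (adjoint T)"
  using is_adjoint_adjoint is_adjoint_bounded by blast

lemma adjoint_adjoint: "bounded_op T \<Longrightarrow> adjoint (adjoint T) = T"
  using adjoint_eqI is_adjoint_sym is_adjoint_adjoint bounded_op_adjoint by blast

section \<open>Partial isometries\<close>

definition partial_isometry :: "'i op \<Rightarrow> bool" where
  "partial_isometry T \<longleftrightarrow> bounded_op T \<and> (\<forall>x. T (adjoint T (T x)) = T x)"

definition is_projection :: "'i op \<Rightarrow> bool" where
  "is_projection R \<longleftrightarrow> bounded_op R \<and> (\<forall>x\<in>l2. R (R x) = R x) \<and>
     (\<forall>x\<in>l2. \<forall>y\<in>l2. cinner (R x) y = cinner x (R y))"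

lemma partial_isometry_adjoint:
  assumes T: "partial_isometry T"
  shows "partial_isometry (adjoint T)"
proof -
  define S where "S = adjoint T"
  have bT: "bounded_op T" and bS: "bounded_op S" and adj: "is_adjoint T S"
    using T bounded_op_adjoint is_adjoint_adjoint by (auto simp: partial_isometry_def S_def)
  have "S (T (S y)) = S y" for y
  proof (cases "y \<in> l2")
    case y: True
    show ?thesis
    proof (rule l2_eqI)
      fix x :: "'a vec" assume x: "x \<in> l2"
      have "cinner x (S (T (S y))) = cinner (S (T x)) (S y)"
        using adj x by (simp add: is_adjoint_cinner is_adjoint_cinner' bounded_op_l2 bS bT)
      also have "\<dots> = cinner (T (S (T x))) y"
        using adj y by (simp add: is_adjoint_cinner bounded_op_l2 bS)
      also have "\<dots> = cinner x (S y)"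
        using T adj x y by (simp add: partial_isometry_def S_def is_adjoint_cinner)
      finally show "cinner x (S (T (S y))) = cinner x (S y)" .
    qed
  qed (simp add: bounded_op_outside bounded_op_zero bS bT)
  then show ?thesis
    using bS by (simp add: partial_isometry_def adjoint_adjoint bT S_def)
qed

lemma partial_isometry_initial_projection:
  assumes T: "partial_isometry T"
  shows "is_projection (\<lambda>x. adjoint T (T x))"
proof -
  have bT: "bounded_op T" and adj: "is_adjoint T (adjoint T)"
    using T is_adjoint_adjoint by (auto simp: partial_isometry_def)
  show ?thesis
    unfolding is_projection_def
    using T adj bounded_op_comp[OF is_adjoint_bounded[OF adj] bT]
    by (simp add: partial_isometry_def is_adjoint_cinner is_adjoint_cinner' bounded_op_l2 bT)
qed

lemma partial_isometry_final_projection: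
  assumes "partial_isometry T"
  shows "is_projection (\<lambda>x. T (adjoint T x))"
  using partial_isometry_initial_projection[OF partial_isometry_adjoint[OF assms]] assms
  by (simp add: adjoint_adjoint partial_isometry_def)

lemma projection_pythagoras:
  assumes R: "is_projection R" and x: "x \<in> l2"
  shows "(vnorm x)\<^sup>2 = (vnorm (R x))\<^sup>2 + (vnorm (\<lambda>i. x i - R x i))\<^sup>2"
proof -
  have Rx: "R x \<in> l2" and d: "(\<lambda>i. x i - R x i) \<in> l2"
    using R x by (simp_all add: is_projection_def bounded_op_l2 l2_diff)
  have "cinner (R x) (\<lambda>i. x i - R x i) = 0"
    using R x Rx by (simp add: is_projection_def cinner_diff_right)
  then show ?thesis
    using vnorm_add_power2[OF Rx d] by simp
qed

lemma projection_fixed_if_norm_le: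
  assumes R: "is_projection R" and x: "x \<in> l2" and le: "vnorm x \<le> vnorm (R x)"
  shows "R x = x"
proof -
  have d: "(\<lambda>i. x i - R x i) \<in> l2"
    using R x by (simp add: is_projection_def bounded_op_l2 l2_diff)
  have "(vnorm x)\<^sup>2 \<le> (vnorm (R x))\<^sup>2"
    using le by (simp add: power_mono)
  then have "vnorm (\<lambda>i. x i - R x i) = 0"
    using projection_pythagoras[OF R x] by simp
  then show ?thesis
    using vnorm_eq_0_imp[OF d] by (simp add: fun_eq_iff)
qed

lemma partial_isometry_norm_initial:
  assumes "partial_isometry T" "x \<in> l2"
  shows "vnorm (adjoint T (T x)) = vnorm (T x)"
proof -
  have Tx: "T x \<in> l2" and adj: "is_adjoint T (adjoint T)"
    using assms is_adjoint_adjoint by (auto simp: partial_isometry_def bounded_op_l2)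
  have "complex_of_real ((vnorm (adjoint T (T x)))\<^sup>2) = cinner (T (adjoint T (T x))) (T x)"
    using adj Tx by (simp add: cinner_self is_adjoint_cinner is_adjoint_bounded bounded_op_l2)
  also have "\<dots> = complex_of_real ((vnorm (T x))\<^sup>2)"
    using assms Tx by (simp add: partial_isometry_def cinner_self)
  finally have "(vnorm (adjoint T (T x)))\<^sup>2 = (vnorm (T x))\<^sup>2"
    by (simp only: of_real_eq_iff)
  then show ?thesis
    by (simp add: power2_eq_iff_nonneg)
qed

lemma partial_isometry_contraction:
  assumes T: "partial_isometry T" and x: "x \<in> l2"
  shows "vnorm (T x) \<le> vnorm x"
proof -
  have "(vnorm x)\<^sup>2 = (vnorm (adjoint T (T x)))\<^sup>2 + (vnorm (\<lambda>i. x i - adjoint T (T x) i))\<^sup>2"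
    by (rule projection_pythagoras[OF partial_isometry_initial_projection[OF T] x])
  then have "(vnorm (T x))\<^sup>2 \<le> (vnorm x)\<^sup>2"
    using partial_isometry_norm_initial[OF T x] by simp
  then show ?thesis
    by (rule power2_le_imp_le) simp
qed

lemma partial_isometry_initial_defect:
  assumes e: "partial_isometry e" and x: "x \<in> l2" "vnorm x \<le> 1"
    and \<epsilon>: "0 \<le> \<epsilon>" "\<epsilon> \<le> 1" and large: "1 - \<epsilon> \<le> vnorm (e x)"
  shows "vnorm (\<lambda>i. x i - adjoint e (e x) i) \<le> sqrt 2 * sqrt \<epsilon>"
proof -
  have "(1 - \<epsilon>)\<^sup>2 \<le> (vnorm (e x))\<^sup>2"
    using large \<epsilon> by (intro power_mono) auto
  moreover have "(1 - \<epsilon>)\<^sup>2 = 1 - 2 * \<epsilon> + \<epsilon>\<^sup>2" "(sqrt 2 * sqrt \<epsilon>)\<^sup>2 = 2 * \<epsilon>"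
    using \<epsilon> by (simp_all add: power2_eq_square algebra_simps)
  moreover have "(vnorm x)\<^sup>2 \<le> 1"
    using x by (simp add: power_le_one)
  moreover have "(vnorm x)\<^sup>2 = (vnorm (e x))\<^sup>2 + (vnorm (\<lambda>i. x i - adjoint e (e x) i))\<^sup>2"
    using projection_pythagoras[OF partial_isometry_initial_projection[OF e] x(1)]
      partial_isometry_norm_initial[OF e x(1)] by simp
  ultimately have "(vnorm (\<lambda>i. x i - adjoint e (e x) i))\<^sup>2 \<le> (sqrt 2 * sqrt \<epsilon>)\<^sup>2"
    using zero_le_power2[of \<epsilon>] by linarith
  then show ?thesis
    by (rule power2_le_imp_le) (use \<epsilon> in simp)
qed

lemma partial_isometry_neg_compression:
  assumes e: "partial_isometry e" and w: "partial_isometry w"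
    and pwq: "(\<lambda>x. e (adjoint e (w (adjoint e (e x))))) = op_neg e"
  shows "(\<lambda>x. w (adjoint e (e x))) = op_neg e"
proof
  fix x
  have be: "bounded_op e" and bE: "bounded_op (adjoint e)" and bw: "bounded_op w"
    using e w bounded_op_adjoint by (auto simp: partial_isometry_def)
  show "w (adjoint e (e x)) = op_neg e x"
  proof (cases "x \<in> l2")
    case x: True
    define v where "v = w (adjoint e (e x))"
    have v: "v \<in> l2" and ev: "e (adjoint e v) = op_neg e x"
      using pwq bw by (simp_all add: v_def bounded_op_l2 fun_eq_iff)
    have "vnorm v \<le> vnorm (adjoint e (e x))"
      unfolding v_def by (rule partial_isometry_contraction[OF w bounded_op_l2[OF bE]])
    also have "\<dots> = vnorm (e (adjoint e v))"
      by (simp add: partial_isometry_norm_initial[OF e x] ev op_neg_def vnorm_neg)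
    finally have "e (adjoint e v) = v"
      using projection_fixed_if_norm_le[OF partial_isometry_final_projection[OF e] v] by simp
    then show ?thesis
      using ev by (simp add: v_def)
  qed (simp add: op_neg_def bounded_op_outside bounded_op_zero be bE bw)
qed

text \<open>The second identity is the first one for the partial isometries e* and w*, transported
  back by taking adjoints.\<close>

lemma partial_isometry_neg_compression_both_sides:
  assumes e: "partial_isometry e" and w: "partial_isometry w"
    and pwq: "(\<lambda>x. e (adjoint e (w (adjoint e (e x))))) = op_neg e"
  shows "(\<lambda>x. w (adjoint e (e x))) = op_neg e" and "(\<lambda>x. e (adjoint e (w x))) = op_neg e"
proof -
  define E where "E = adjoint e"
  define W where "W = adjoint w"
  have be: "bounded_op e" and bE: "bounded_op E" and bw: "bounded_op w"
    using e w bounded_op_adjoint by (auto simp: partial_isometry_def E_def)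
  have eE: "is_adjoint e E" and Ee: "is_adjoint E e" and wW: "is_adjoint w W" and Ww: "is_adjoint W w"
    using be bw is_adjoint_adjoint is_adjoint_sym by (auto simp: E_def W_def)
  show "(\<lambda>x. w (adjoint e (e x))) = op_neg e"
    by (rule partial_isometry_neg_compression[OF e w pwq])
  have bq: "bounded_op (\<lambda>x. E (e x))" by (rule bounded_op_comp[OF bE be])
  have bwq: "bounded_op (\<lambda>x. w (E (e x)))" by (rule bounded_op_comp[OF bw bq])
  have bEwq: "bounded_op (\<lambda>x. E (w (E (e x))))" by (rule bounded_op_comp[OF bE bwq])
  have "is_adjoint (\<lambda>x. e (E (w (E (e x))))) (\<lambda>y. E (e (W (e (E y)))))"
    using is_adjoint_comp[OF eE is_adjoint_comp[OF Ee is_adjoint_comp[OF wW is_adjoint_comp[OF Ee eE be] bq] bwq] bEwq] .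
  then have "(\<lambda>y. E (e (W (e (E y))))) = op_neg E"
    using pwq is_adjoint_unique is_adjoint_op_neg[OF eE be] by (simp add: E_def)
  moreover have "partial_isometry E" "partial_isometry W" "adjoint E = e"
    using e w by (simp_all add: E_def W_def partial_isometry_adjoint adjoint_adjoint be)
  ultimately have WeE: "(\<lambda>x. W (e (E x))) = op_neg E"
    using partial_isometry_neg_compression by metis
  have "is_adjoint (\<lambda>x. W (e (E x))) (\<lambda>y. e (E (w y)))"
    using is_adjoint_comp[OF Ww is_adjoint_comp[OF eE Ee bE] bounded_op_comp[OF be bE]] .
  then show "(\<lambda>x. e (adjoint e (w x))) = op_neg e"
    using is_adjoint_unique is_adjoint_op_neg[OF Ee bE] WeE by (simp add: E_def)
qed

section \<open>The compact C*-algebra\<close>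

definition finite_net :: "'i op \<Rightarrow> real \<Rightarrow> 'i vec set \<Rightarrow> bool" where
  "finite_net T \<epsilon> F \<longleftrightarrow> finite F \<and> F \<subseteq> l2 \<and>
     (\<forall>x\<in>l2. vnorm x \<le> 1 \<longrightarrow> (\<exists>f\<in>F. vnorm (\<lambda>i. T x i - f i) < \<epsilon>))"

lemma compact_cstar_iff:
  "u \<in> compact_cstar blk \<longleftrightarrow> bounded_op u \<and> (\<forall>\<epsilon>>0. \<exists>F. finite_net u \<epsilon> F) \<and>
     (\<forall>k. \<forall>x\<in>l2. u (block_proj blk k x) = block_proj blk k (u x))"
  unfolding compact_cstar_def compact_op_def finite_net_def by blast

lemma compact_cstar_bounded: "u \<in> compact_cstar blk \<Longrightarrow> bounded_op u"
  by (simp add: compact_cstar_iff)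

lemma compact_cstar_block:
  "u \<in> compact_cstar blk \<Longrightarrow> x \<in> l2 \<Longrightarrow> u (block_proj blk k x) = block_proj blk k (u x)"
  by (simp add: compact_cstar_iff)

lemma l2_block_proj: "x \<in> l2 \<Longrightarrow> block_proj blk k x \<in> l2"
  unfolding l2_iff_summable block_proj_def
  by (rule summable_on_comparison_test[of "\<lambda>i. (cmod (x i))\<^sup>2"]) auto

lemma cinner_block_proj: "cinner (block_proj blk k x) y = cinner x (block_proj blk k y)"
  unfolding cinner_def block_proj_def by (rule infsum_cong) auto

lemma adjoint_block_proj:
  assumes u: "u \<in> compact_cstar blk" and y: "y \<in> l2"
  shows "adjoint u (block_proj blk k y) = block_proj blk k (adjoint u y)"
proof (rule l2_eqI)
  have bu: "bounded_op u" and adj: "is_adjoint u (adjoint u)"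
    using u compact_cstar_bounded is_adjoint_adjoint by blast+
  fix x :: "'a vec" assume x: "x \<in> l2"
  have "cinner x (adjoint u (block_proj blk k y)) = cinner (block_proj blk k (u x)) y"
    using adj x y by (simp add: is_adjoint_cinner l2_block_proj cinner_block_proj)
  also have "\<dots> = cinner (u (block_proj blk k x)) y"
    using u x by (simp add: compact_cstar_block)
  also have "\<dots> = cinner x (block_proj blk k (adjoint u y))"
    using adj x y by (simp add: is_adjoint_cinner l2_block_proj cinner_block_proj)
  finally show "cinner x (adjoint u (block_proj blk k y)) = cinner x (block_proj blk k (adjoint u y))" .
qed

lemma compact_cstar_zero: "op_zero \<in> compact_cstar blk"
  unfolding compact_cstar_iff finite_net_def using bounded_op_op_zero
  by (auto simp: op_zero_def block_proj_def intro!: exI[of _ "{\<lambda>i. 0}"])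

lemma compact_cstar_add:
  assumes u: "u \<in> compact_cstar blk" and v: "v \<in> compact_cstar blk"
  shows "op_add u v \<in> compact_cstar blk"
  unfolding compact_cstar_iff
proof (intro conjI allI impI ballI)
  have bu: "bounded_op u" and bv: "bounded_op v"
    using u v by (simp_all add: compact_cstar_bounded)
  then show "bounded_op (op_add u v)"
    by (rule bounded_op_op_add)
  fix \<epsilon> :: real assume "\<epsilon> > 0"
  then obtain F G where F: "finite_net u (\<epsilon> / 2) F" and G: "finite_net v (\<epsilon> / 2) G"
    using u v by (meson compact_cstar_iff half_gt_zero)
  define H where "H = (\<lambda>(f, g). (\<lambda>i. f i + g i)) ` (F \<times> G)"
  have "\<exists>h\<in>H. vnorm (\<lambda>i. op_add u v x i - h i) < \<epsilon>" if x: "x \<in> l2" "vnorm x \<le> 1" for x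
  proof -
    obtain f g where f: "f \<in> F" "vnorm (\<lambda>i. u x i - f i) < \<epsilon> / 2"
      and g: "g \<in> G" "vnorm (\<lambda>i. v x i - g i) < \<epsilon> / 2"
      using F G x unfolding finite_net_def by blast
    have "f \<in> l2" "g \<in> l2" using f g F G by (auto simp: finite_net_def)
    then have "vnorm (\<lambda>i. (u x i - f i) + (v x i - g i)) \<le> vnorm (\<lambda>i. u x i - f i) + vnorm (\<lambda>i. v x i - g i)"
      by (intro vnorm_triangle l2_diff) (simp_all add: bounded_op_l2 bu bv)
    then have "vnorm (\<lambda>i. op_add u v x i - (f i + g i)) < \<epsilon>"
      using f g by (simp add: op_add_def algebra_simps)
    then show ?thesis
      using f g by (auto simp: H_def)
  qed
  then show "\<exists>H. finite_net (op_add u v) \<epsilon> H"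
    using F G unfolding finite_net_def by (intro exI[of _ H]) (auto simp: H_def intro!: l2_add)
next
  fix k and x :: "'a vec" assume "x \<in> l2"
  then show "op_add u v (block_proj blk k x) = block_proj blk k (op_add u v x)"
    using compact_cstar_block[OF u, of x k] compact_cstar_block[OF v, of x k]
    by (auto simp: op_add_def block_proj_def fun_eq_iff)
qed

lemma compact_cstar_neg:
  assumes u: "u \<in> compact_cstar blk"
  shows "op_neg u \<in> compact_cstar blk"
  unfolding compact_cstar_iff
proof (intro conjI allI impI ballI)
  show "bounded_op (op_neg u)"
    using u by (simp add: compact_cstar_bounded bounded_op_op_neg)
  fix \<epsilon> :: real assume "\<epsilon> > 0"
  then obtain F where F: "finite_net u \<epsilon> F"
    using u by (meson compact_cstar_iff)
  have "vnorm (\<lambda>i. op_neg u x i - - f i) = vnorm (\<lambda>i. u x i - f i)" for x f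
    using vnorm_neg[of "\<lambda>i. u x i - f i"] by (simp add: op_neg_def)
  then have "finite_net (op_neg u) \<epsilon> ((\<lambda>f i. - f i) ` F)"
    using F unfolding finite_net_def by (auto intro: l2_neg)
  then show "\<exists>H. finite_net (op_neg u) \<epsilon> H" ..
next
  fix k and x :: "'a vec" assume "x \<in> l2"
  then show "op_neg u (block_proj blk k x) = block_proj blk k (op_neg u x)"
    using compact_cstar_block[OF u, of x k] by (auto simp: op_neg_def block_proj_def fun_eq_iff)
qed

lemma compact_cstar_sum: "finite F \<Longrightarrow> F \<subseteq> compact_cstar blk \<Longrightarrow> op_sum F \<in> compact_cstar blk"
proof (induction F rule: finite_induct)
  case empty
  then show ?case using compact_cstar_zero by (simp add: op_sum_def op_zero_def)
next
  case (insert a F)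
  then have "op_add a (op_sum F) \<in> compact_cstar blk"
    by (intro compact_cstar_add) auto
  with insert show ?case by (simp add: op_sum_def op_add_def)
qed

lemma compact_cstar_comp_contraction:
  assumes u: "u \<in> compact_cstar blk" and B: "bounded_op B"
    and contr: "\<And>x. x \<in> l2 \<Longrightarrow> vnorm (B x) \<le> vnorm x"
    and block: "\<And>k x. x \<in> l2 \<Longrightarrow> B (block_proj blk k x) = block_proj blk k (B x)"
  shows "(\<lambda>x. u (B x)) \<in> compact_cstar blk"
  unfolding compact_cstar_iff
proof (intro conjI allI impI ballI)
  show "bounded_op (\<lambda>x. u (B x))"
    using u B by (simp add: compact_cstar_bounded bounded_op_comp)
  fix \<epsilon> :: real assume "\<epsilon> > 0"
  then obtain F where "finite_net u \<epsilon> F"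
    using u by (meson compact_cstar_iff)
  then have "finite_net (\<lambda>x. u (B x)) \<epsilon> F"
    unfolding finite_net_def using contr bounded_op_l2[OF B] by (meson order.trans)
  then show "\<exists>F. finite_net (\<lambda>x. u (B x)) \<epsilon> F" ..
next
  fix k and x :: "'a vec" assume "x \<in> l2"
  then show "u (B (block_proj blk k x)) = block_proj blk k (u (B x))"
    using u block bounded_op_l2[OF B] by (simp add: compact_cstar_block)
qed

section \<open>The triple product and the Peirce decomposition\<close>

lemma partial_isometry_if_tripotent:
  assumes "bounded_op e" "trip e e e = e"
  shows "partial_isometry e"
proof -
  have "e (adjoint e (e x)) = e x" for x
    using fun_cong[OF fun_cong[OF assms(2), of x]] by (simp add: trip_def fun_eq_iff)
  with assms(1) show ?thesis
    by (simp add: partial_isometry_def)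
qed

lemma trip_add_right:
  assumes e: "bounded_op e" and u: "\<And>x. u x \<in> l2" and v: "\<And>x. v x \<in> l2"
  shows "trip e e (op_add u v) = op_add (trip e e u) (trip e e v)"
proof (intro ext)
  fix x i
  have E: "bounded_op (adjoint e)" by (rule bounded_op_adjoint[OF e])
  have "e (adjoint e (op_add u v x)) = (\<lambda>i. e (adjoint e (u x)) i + e (adjoint e (v x)) i)"
    unfolding op_add_def bounded_op_add[OF E u v] by (rule bounded_op_add[OF e bounded_op_l2[OF E] bounded_op_l2[OF E]])
  then show "trip e e (op_add u v) x i = op_add (trip e e u) (trip e e v) x i"
    unfolding trip_def by (simp add: op_add_def add_divide_distrib)
qed

lemma trip_smult_right:
  assumes e: "bounded_op e" and u: "\<And>x. u x \<in> l2"
  shows "trip e e (op_smult c u) = op_smult c (trip e e u)"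
proof (intro ext)
  fix x i
  have E: "bounded_op (adjoint e)" by (rule bounded_op_adjoint[OF e])
  have "e (adjoint e (op_smult c u x)) = (\<lambda>i. c * e (adjoint e (u x)) i)"
    unfolding op_smult_def bounded_op_scale[OF E u] by (rule bounded_op_scale[OF e bounded_op_l2[OF E]])
  then show "trip e e (op_smult c u) x i = op_smult c (trip e e u) x i"
    unfolding trip_def by (simp add: op_smult_def algebra_simps)
qed

text \<open>L = L(e,e) acts on the Peirce spaces by 1, 1/2, 0, so P_0(e) = (1 - L)(1 - 2 L).\<close>

lemma peirce0_component_eq:
  assumes A: "A \<subseteq> Collect bounded_op" and e: "bounded_op e"
    and a: "a \<in> peirce2 A e" and b: "b \<in> peirce1 A e" and z: "z \<in> peirce0 A e"
    and w: "w = op_add (op_add a b) z"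
  shows "z = (\<lambda>x i. w x i - 3 * trip e e w x i + 2 * trip e e (trip e e w) x i)"
proof -
  have "bounded_op a" "bounded_op b" "bounded_op z"
    using a b z A by (auto simp: peirce2_def peirce1_def peirce0_def)
  then have l2: "\<And>x. a x \<in> l2" "\<And>x. b x \<in> l2" "\<And>x. z x \<in> l2" "\<And>x. op_smult (1/2) b x \<in> l2"
    unfolding op_smult_def by (blast intro: bounded_op_l2 l2_scale)+
  have eig: "trip e e a = a" "trip e e b = op_smult (1/2) b" "trip e e z = op_zero"
    using a b z by (simp_all add: peirce2_def peirce1_def peirce0_def)
  have ab: "\<And>x. op_add a b x \<in> l2"
    unfolding op_add_def by (blast intro: l2_add l2)
  have "trip e e w = op_add (op_add a (op_smult (1/2) b)) op_zero"
    unfolding w trip_add_right[OF e ab l2(3)] trip_add_right[OF e l2(1) l2(2)] eig ..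
  then have Lw: "trip e e w = op_add a (op_smult (1/2) b)"
    by (simp add: op_add_def op_zero_def)
  have LLw: "trip e e (op_add a (op_smult (1/2) b)) = op_add a (op_smult (1/2) (op_smult (1/2) b))"
    unfolding trip_add_right[OF e l2(1) l2(4)] trip_smult_right[OF e l2(2)] eig ..
  show ?thesis
    unfolding Lw LLw by (simp add: w op_add_def op_smult_def fun_eq_iff algebra_simps)
qed

lemma P0_eqI:
  assumes "A \<subseteq> Collect bounded_op" "bounded_op e"
    and "a \<in> peirce2 A e" "b \<in> peirce1 A e" "z \<in> peirce0 A e" "w = op_add (op_add a b) z"
  shows "P0 A e w = z"
  unfolding P0_def
proof (rule the_equality)
  show "z \<in> peirce0 A e \<and> (\<exists>a\<in>peirce2 A e. \<exists>b\<in>peirce1 A e. w = op_add (op_add a b) z)"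
    using assms by blast
  show "z' = z" if "z' \<in> peirce0 A e \<and> (\<exists>a\<in>peirce2 A e. \<exists>b\<in>peirce1 A e. w = op_add (op_add a b) z')"
    for z'
  proof -
    from that obtain a' b' where "a' \<in> peirce2 A e" "b' \<in> peirce1 A e" "z' \<in> peirce0 A e"
      and "w = op_add (op_add a' b') z'"
      by blast
    from peirce0_component_eq[OF assms(1,2) this] peirce0_component_eq[OF assms]
    show "z' = z" by simp
  qed
qed

lemma triple_sum_eq_diagonal:
  fixes g :: "'a \<Rightarrow> 'a \<Rightarrow> 'a \<Rightarrow> 'b::field_char_0"
  assumes F: "finite F"
    and antisym: "\<And>u v t. u \<in> F \<Longrightarrow> v \<in> F \<Longrightarrow> t \<in> F \<Longrightarrow> u \<noteq> v \<Longrightarrow> g u v t + g t v u = 0"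
  shows "(\<Sum>u\<in>F. \<Sum>v\<in>F. \<Sum>t\<in>F. g u v t) = (\<Sum>v\<in>F. g v v v)"
proof -
  have diag: "(\<Sum>u\<in>F. \<Sum>t\<in>F. g u v t) = g v v v" if v: "v \<in> F" for v
  proof -
    have "2 * (\<Sum>u\<in>F. \<Sum>t\<in>F. g u v t) = (\<Sum>u\<in>F. \<Sum>t\<in>F. g u v t + g t v u)"
      using sum.swap[of "\<lambda>u t. g t v u" F F] by (simp add: sum.distrib)
    also have "\<dots> = (\<Sum>u\<in>F. \<Sum>t\<in>F. if u = v then if t = v then 2 * g v v v else 0 else 0)"
    proof (intro sum.cong refl)
      fix u t assume "u \<in> F" "t \<in> F"
      then show "g u v t + g t v u = (if u = v then if t = v then 2 * g v v v else 0 else 0)"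
        using antisym[of u v t] antisym[of t v u] v by (auto simp: add.commute)
    qed
    also have "\<dots> = 2 * g v v v"
      using F v by (subst sum.swap) simp
    finally show ?thesis by simp
  qed
  have "(\<Sum>u\<in>F. \<Sum>v\<in>F. \<Sum>t\<in>F. g u v t) = (\<Sum>v\<in>F. \<Sum>u\<in>F. \<Sum>t\<in>F. g u v t)"
    by (rule sum.swap)
  also have "\<dots> = (\<Sum>v\<in>F. g v v v)"
    using diag by (rule sum.cong[OF refl])
  finally show ?thesis .
qed

lemma partial_isometry_orthogonal_sum:
  assumes A: "A \<subseteq> Collect bounded_op" and F: "finite F" "F \<subseteq> A"
    and trip: "\<And>u. u \<in> F \<Longrightarrow> trip u u u = u"
    and orth: "\<And>u v. u \<in> F \<Longrightarrow> v \<in> F \<Longrightarrow> u \<noteq> v \<Longrightarrow> orth A u v"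
  shows "partial_isometry (op_sum F)"
proof -
  have bF: "\<And>u. u \<in> F \<Longrightarrow> bounded_op u" and bF': "\<And>u. u \<in> F \<Longrightarrow> bounded_op (adjoint u)"
    using A F(2) bounded_op_adjoint by auto
  have w: "bounded_op (op_sum F)"
    using bounded_op_pointwise_sum[OF F(1) bF] by (simp add: op_sum_def)
  have W: "adjoint (op_sum F) = (\<lambda>y i. \<Sum>v\<in>F. adjoint v y i)"
    using is_adjoint_sum[OF F(1) is_adjoint_adjoint bF] bF by (intro adjoint_eqI) auto
  have "op_sum F (adjoint (op_sum F) (op_sum F x)) i = op_sum F x i" for x i
  proof -
    have adj_sum: "adjoint v (op_sum F x) = (\<lambda>k. \<Sum>t\<in>F. adjoint v (t x) k)" if "v \<in> F" for v
      unfolding op_sum_def using that by (intro bounded_op_sum[OF bF' F(1)] bounded_op_l2 bF)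
    have inner: "(\<lambda>k. \<Sum>t\<in>F. adjoint v (t x) k) \<in> l2" if "v \<in> F" for v
      using that by (intro l2_sum[OF F(1)] bounded_op_l2 bF')
    have "u (\<lambda>k. \<Sum>v\<in>F. \<Sum>t\<in>F. adjoint v (t x) k) = (\<lambda>k. \<Sum>v\<in>F. \<Sum>t\<in>F. u (adjoint v (t x)) k)"
      if "u \<in> F" for u
      using bounded_op_sum[OF bF[OF that] F(1) inner] bounded_op_sum[OF bF[OF that] F(1) bounded_op_l2[OF bF']]
      by simp
    then have "op_sum F (adjoint (op_sum F) (op_sum F x)) i = (\<Sum>u\<in>F. \<Sum>v\<in>F. \<Sum>t\<in>F. u (adjoint v (t x)) i)"
      unfolding W using adj_sum by (simp add: op_sum_def[of F] cong: sum.cong)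
    also have "\<dots> = (\<Sum>v\<in>F. v (adjoint v (v x)) i)"
    proof (rule triple_sum_eq_diagonal[OF F(1)])
      fix u v t assume "u \<in> F" "v \<in> F" "t \<in> F" "u \<noteq> v"
      then have "trip u v t x i = 0"
        using orth F(2) by (auto simp: orth_def op_zero_def)
      then show "u (adjoint v (t x)) i + t (adjoint v (u x)) i = 0"
        by (simp add: trip_def)
    qed
    also have "\<dots> = op_sum F x i"
      using partial_isometry_if_tripotent[OF bF trip] unfolding op_sum_def partial_isometry_def
      by (intro sum.cong) auto
    finally show ?thesis .
  qed
  with w show ?thesis
    by (simp add: partial_isometry_def fun_eq_iff)
qed

lemma finite_rank_trip_compact_cstar:
  assumes "finite_rank_trip (compact_cstar blk) w"
  shows "w \<in> compact_cstar blk" and "partial_isometry w"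
proof -
  obtain F where F: "finite F" "\<forall>u\<in>F. minimal_trip (compact_cstar blk) u"
    and orth: "\<forall>u\<in>F. \<forall>v\<in>F. u \<noteq> v \<longrightarrow> orth (compact_cstar blk) u v" and w: "w = op_sum F"
    using assms unfolding finite_rank_trip_def by blast
  have FA: "F \<subseteq> compact_cstar blk" and trip: "\<And>u. u \<in> F \<Longrightarrow> trip u u u = u"
    using F(2) by (auto simp: minimal_trip_def tripotent_def)
  show "w \<in> compact_cstar blk"
    unfolding w by (rule compact_cstar_sum[OF F(1) FA])
  show "partial_isometry w"
    unfolding w using compact_cstar_bounded orth
    by (intro partial_isometry_orthogonal_sum[OF _ F(1) FA trip]) auto
qed

section \<open>Compressing w by the minimal tripotent e\<close>

lemma op_norm_approx:
  assumes "op_norm T = s" "\<epsilon> > 0"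
  obtains x where "x \<in> l2" "vnorm x \<le> 1" "s - \<epsilon> < vnorm (T x)"
proof -
  let ?S = "{vnorm (T x) | x. x \<in> l2 \<and> vnorm x \<le> 1}"
  have "?S \<noteq> {}" "s - \<epsilon> < Sup ?S"
    using assms l2_zero vnorm_zero by (fastforce simp: op_norm_def)+
  then show thesis
    using that less_cSupE by blast
qed

lemma vnorm_near_antipodal:
  assumes a: "a \<in> l2" "vnorm a \<le> 1" and b: "b \<in> l2" "vnorm b \<le> 1"
    and \<epsilon>: "0 < \<epsilon>" "\<epsilon> \<le> 2" and far: "2 - \<epsilon> < vnorm (\<lambda>i. a i - b i)"
  shows "vnorm (\<lambda>i. a i + b i) \<le> 2 * sqrt \<epsilon>" and "1 - \<epsilon> < vnorm a"
proof -
  have "vnorm (\<lambda>i. a i + - b i) \<le> vnorm a + vnorm (\<lambda>i. - b i)"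
    by (rule vnorm_triangle[OF a(1) l2_neg[OF b(1)]])
  then have "vnorm (\<lambda>i. a i - b i) \<le> vnorm a + vnorm b"
    by (simp add: vnorm_neg)
  with far b(2) show "1 - \<epsilon> < vnorm a"
    by linarith
  have "(2 - \<epsilon>)\<^sup>2 \<le> (vnorm (\<lambda>i. a i - b i))\<^sup>2"
    using far \<epsilon> by (intro power_mono) auto
  moreover have "(vnorm a)\<^sup>2 \<le> 1" "(vnorm b)\<^sup>2 \<le> 1"
    using a b by (simp_all add: power_le_one)
  moreover have "(2 - \<epsilon>)\<^sup>2 = 4 - 4 * \<epsilon> + \<epsilon>\<^sup>2" "0 \<le> \<epsilon>\<^sup>2"
    by (simp_all add: power2_eq_square algebra_simps)
  moreover note vnorm_parallelogram[OF a(1) b(1)]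
  ultimately have "(vnorm (\<lambda>i. a i + b i))\<^sup>2 \<le> 4 * \<epsilon>"
    by linarith
  also have "\<dots> = (2 * sqrt \<epsilon>)\<^sup>2"
    using \<epsilon> by (simp add: power_mult_distrib)
  finally show "vnorm (\<lambda>i. a i + b i) \<le> 2 * sqrt \<epsilon>"
    by (rule power2_le_imp_le) (use \<epsilon> in simp)
qed

lemma compression_in_peirce2:
  assumes eA: "e \<in> compact_cstar blk" and e: "partial_isometry e"
    and wA: "w \<in> compact_cstar blk" and w: "partial_isometry w"
  shows "(\<lambda>x. e (adjoint e (w (adjoint e (e x))))) \<in> peirce2 (compact_cstar blk) e"
proof -
  define E where "E = adjoint e"
  define B where "B = (\<lambda>x. E (w (E (e x))))"
  have be: "bounded_op e" and bE: "bounded_op E" and bw: "bounded_op w"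
    using e w bounded_op_adjoint by (auto simp: partial_isometry_def E_def)
  have E: "partial_isometry E"
    unfolding E_def by (rule partial_isometry_adjoint[OF e])
  have "bounded_op B"
    unfolding B_def by (rule bounded_op_comp[OF bE bounded_op_comp[OF bw bounded_op_comp[OF bE be]]])
  moreover have "vnorm (B x) \<le> vnorm x" if x: "x \<in> l2" for x
  proof -
    have "vnorm (B x) \<le> vnorm (w (E (e x)))"
      unfolding B_def by (rule partial_isometry_contraction[OF E bounded_op_l2[OF bw]])
    also have "\<dots> \<le> vnorm (E (e x))"
      by (rule partial_isometry_contraction[OF w bounded_op_l2[OF bE]])
    also have "\<dots> \<le> vnorm (e x)"
      by (rule partial_isometry_contraction[OF E bounded_op_l2[OF be]])
    also have "\<dots> \<le> vnorm x"
      by (rule partial_isometry_contraction[OF e x])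
    finally show ?thesis .
  qed
  moreover have "B (block_proj blk k x) = block_proj blk k (B x)" if "x \<in> l2" for k x
    using that eA wA bounded_op_l2[OF bE] bounded_op_l2[OF be] bounded_op_l2[OF bw]
    by (simp add: B_def E_def compact_cstar_block adjoint_block_proj)
  ultimately have "(\<lambda>x. e (B x)) \<in> compact_cstar blk"
    by (rule compact_cstar_comp_contraction[OF eA])
  moreover have "trip e e (\<lambda>x. e (B x)) = (\<lambda>x. e (B x))"
  proof -
    have "e (adjoint e (e x)) = e x" for x
      using e by (simp add: partial_isometry_def)
    then show ?thesis
      by (simp add: trip_def B_def E_def)
  qed
  ultimately show ?thesis
    by (simp add: peirce2_def B_def E_def)
qed

lemma compression_coefficient_identity:
  assumes e: "partial_isometry e" and w: "bounded_op w" and x: "x \<in> l2"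
    and pwq: "(\<lambda>x. e (adjoint e (w (adjoint e (e x))))) = op_smult c e"
  shows "(c + 1) * cinner (e x) (e x)
    = cinner (e x) (\<lambda>i. e x i + w x i) - cinner (e x) (w (\<lambda>i. x i - adjoint e (e x) i))"
proof -
  define E where "E = adjoint e"
  have be: "bounded_op e" and bE: "bounded_op E"
    using e bounded_op_adjoint by (auto simp: partial_isometry_def E_def)
  have l2: "e x \<in> l2" "E (e x) \<in> l2" "w x \<in> l2" "w (E (e x)) \<in> l2"
    using be bE w by (simp_all add: bounded_op_l2)
  have "c * cinner (e x) (e x) = cinner (e x) (e (E (w (E (e x)))))"
    using fun_cong[OF pwq, of x] l2 by (simp add: E_def op_smult_def cinner_scale_right)
  also have "\<dots> = cinner (e (E (e x))) (w (E (e x)))"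
    using partial_isometry_final_projection[OF e] l2 by (simp add: is_projection_def E_def)
  also have "\<dots> = cinner (e x) (\<lambda>i. w x i - w (\<lambda>i. x i - E (e x) i) i)"
    using e x l2 by (simp add: partial_isometry_def E_def bounded_op_diff[OF w])
  finally show ?thesis
    using l2 by (simp add: E_def cinner_diff_right cinner_add_right bounded_op_l2 w algebra_simps)
qed

lemma compression_coefficient_bound:
  assumes e: "partial_isometry e" and w: "partial_isometry w"
    and pwq: "(\<lambda>x. e (adjoint e (w (adjoint e (e x))))) = op_smult c e"
    and norm: "op_norm (op_sub e w) = 2" and \<epsilon>: "0 < \<epsilon>" "\<epsilon> \<le> 1/4"
  shows "cmod (c + 1) \<le> 2 * (2 + sqrt 2) * sqrt \<epsilon>"
proof -
  have be: "bounded_op e" and bw: "bounded_op w"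
    using e w by (simp_all add: partial_isometry_def)
  obtain x where x: "x \<in> l2" "vnorm x \<le> 1" and far: "2 - \<epsilon> < vnorm (\<lambda>i. e x i - w x i)"
    using op_norm_approx[OF norm \<epsilon>(1)] by (auto simp: op_sub_def)
  define a where "a = e x"
  define d where "d = (\<lambda>i. x i - adjoint e (e x) i)"
  have a: "a \<in> l2" "vnorm a \<le> 1" and wx: "w x \<in> l2" "vnorm (w x) \<le> 1"
    using x be bw partial_isometry_contraction[OF e x(1)] partial_isometry_contraction[OF w x(1)]
    by (simp_all add: a_def bounded_op_l2)
  have sum: "vnorm (\<lambda>i. a i + w x i) \<le> 2 * sqrt \<epsilon>" and a_large: "1 - \<epsilon> < vnorm a"
    using vnorm_near_antipodal[OF a wx _ _ far[folded a_def]] \<epsilon> by auto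
  have "3 / 4 \<le> vnorm a"
    using a_large \<epsilon> by linarith
  then have "(3 / 4)\<^sup>2 \<le> (vnorm a)\<^sup>2"
    by (rule power_mono) simp
  then have half: "1 / 2 \<le> (vnorm a)\<^sup>2"
    by (simp add: power_divide)
  have d: "d \<in> l2"
    unfolding d_def by (rule l2_diff[OF x(1) bounded_op_l2[OF bounded_op_adjoint[OF be]]])
  have "vnorm d \<le> sqrt 2 * sqrt \<epsilon>"
    unfolding d_def using partial_isometry_initial_defect[OF e x, of \<epsilon>] a_large \<epsilon> by (simp add: a_def)
  then have wd: "vnorm (w d) \<le> sqrt 2 * sqrt \<epsilon>"
    using partial_isometry_contraction[OF w d] by linarith
  have "cmod (c + 1) * (vnorm a)\<^sup>2 = cmod ((c + 1) * cinner a a)"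
    by (simp add: cinner_self[OF a(1)] norm_mult del: of_real_power)
  also have "\<dots> = cmod (cinner a (\<lambda>i. a i + w x i) - cinner a (w d))"
    unfolding a_def d_def compression_coefficient_identity[OF e bw x(1) pwq] ..
  also have "\<dots> \<le> vnorm a * vnorm (\<lambda>i. a i + w x i) + vnorm a * vnorm (w d)"
    by (rule order_trans[OF norm_triangle_ineq4 add_mono])
       (simp_all add: cinner_cauchy_schwarz a(1) l2_add wx(1) bounded_op_l2 bw)
  also have "\<dots> \<le> 1 * (2 * sqrt \<epsilon>) + 1 * (sqrt 2 * sqrt \<epsilon>)"
    using a sum wd by (intro add_mono mult_mono) auto
  finally have "cmod (c + 1) * (vnorm a)\<^sup>2 \<le> (2 + sqrt 2) * sqrt \<epsilon>"
    by (simp add: algebra_simps)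
  moreover have "cmod (c + 1) * (1 / 2) \<le> cmod (c + 1) * (vnorm a)\<^sup>2"
    using half by (intro mult_left_mono) auto
  ultimately show ?thesis by linarith
qed

lemma compression_coefficient_eq_neg_one:
  assumes "partial_isometry e" "partial_isometry w"
    and "(\<lambda>x. e (adjoint e (w (adjoint e (e x))))) = op_smult c e"
    and "op_norm (op_sub e w) = 2"
  shows "c = -1"
proof -
  have "c + 1 = 0"
    using compression_coefficient_bound[OF assms]
    by (intro eq_0_if_norm_le_sqrt[of "1/4" _ "2 * (2 + sqrt 2)"]) auto
  then show ?thesis
    by (simp add: add_eq_0_iff2)
qed

lemma trip_eq_neg_if_compression_neg:
  assumes "partial_isometry e" "partial_isometry w"
    and "(\<lambda>x. e (adjoint e (w (adjoint e (e x))))) = op_neg e"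
  shows "trip e e w = op_neg e"
  using partial_isometry_neg_compression_both_sides[OF assms]
  by (simp add: trip_def op_neg_def fun_eq_iff)

lemma P0_eq_if_trip_eq_neg:
  assumes eA: "e \<in> compact_cstar blk" and e: "trip e e e = e"
    and wA: "w \<in> compact_cstar blk" and w: "trip e e w = op_neg e"
  shows "P0 (compact_cstar blk) e w = op_add w e"
proof (rule P0_eqI)
  have be: "bounded_op e" and bw: "bounded_op w"
    using eA wA by (simp_all add: compact_cstar_bounded)
  have l2: "\<And>x. e x \<in> l2" "\<And>x. w x \<in> l2"
    using be bw by (simp_all add: bounded_op_l2)
  show "compact_cstar blk \<subseteq> Collect bounded_op" "bounded_op e"
    using compact_cstar_bounded be by auto
  have "trip e e (op_smult (-1) e) = op_smult (-1) e"
    using trip_smult_right[OF be l2(1)] e by simp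
  then show "op_neg e \<in> peirce2 (compact_cstar blk) e"
    using compact_cstar_neg[OF eA] by (simp add: peirce2_def op_smult_def op_neg_def)
  have "trip e e op_zero = op_zero"
    by (simp add: trip_def op_zero_def fun_eq_iff bounded_op_zero be bounded_op_adjoint)
  then show "op_zero \<in> peirce1 (compact_cstar blk) e"
    using compact_cstar_zero by (simp add: peirce1_def op_smult_def op_zero_def)
  have "trip e e (op_add w e) = op_zero"
    unfolding trip_add_right[OF be l2(2) l2(1)] w e by (simp add: op_add_def op_neg_def op_zero_def)
  then show "op_add w e \<in> peirce0 (compact_cstar blk) e"
    using compact_cstar_add[OF wA eA] by (simp add: peirce0_def)
  show "w = op_add (op_add (op_neg e) op_zero) (op_add w e)"
    by (simp add: op_add_def op_neg_def op_zero_def)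
qed

theorem lemma3p5:
  fixes blk :: "'i \<Rightarrow> 'k" and e w :: "'i op"
  assumes "finite_rank_trip (compact_cstar blk) e"
    and "finite_rank_trip (compact_cstar blk) w"
    and "minimal_trip (compact_cstar blk) e"
    and "op_norm (op_sub e w) = 2"
  shows "w = op_add (op_neg e) (P0 (compact_cstar blk) e w)"
proof -
  have eA: "e \<in> compact_cstar blk" and e3: "trip e e e = e"
    and peirce2_e: "peirce2 (compact_cstar blk) e = {op_smult c e | c. True}"
    using assms(3) by (auto simp: minimal_trip_def tripotent_def)
  have e: "partial_isometry e"
    by (rule partial_isometry_if_tripotent[OF compact_cstar_bounded[OF eA] e3])
  have wA: "w \<in> compact_cstar blk" and w: "partial_isometry w"
    using finite_rank_trip_compact_cstar[OF assms(2)] by auto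
  obtain c where pwq: "(\<lambda>x. e (adjoint e (w (adjoint e (e x))))) = op_smult c e"
    using compression_in_peirce2[OF eA e wA w] peirce2_e by blast
  moreover have "c = -1"
    by (rule compression_coefficient_eq_neg_one[OF e w pwq assms(4)])
  ultimately have "trip e e w = op_neg e"
    using trip_eq_neg_if_compression_neg[OF e w] by (simp add: op_smult_def op_neg_def)
  then have "P0 (compact_cstar blk) e w = op_add w e"
    by (rule P0_eq_if_trip_eq_neg[OF eA e3 wA])
  then show ?thesis
    by (simp add: op_add_def op_neg_def)
qed

end
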